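(* Let $T$ be a skew-nontrivial tree and let $S\subseteq W^{\emptyset}_-(T)$. Then $S$ is a PSD forcing set of $SD_2(T)$ if and only if $S$ is a skew forcing set of $T$.
   Context: Skew forcing: vertices are colored blue or white; if any vertex $u$ (blue or white) has exactly one white neighbor $v$, then $u$ may force $v$ to become blue; a skew forcing set is a set of initially blue vertices from which repeated forcing turns all vertices blue. PSD forcing: if $B$ is the current blue set, $C$ a component of $G-B$, and $u$ a blue vertex with $N_G(u)\cap V(C)=\{v\}$, then $u$ may force $v$; a PSD forcing set is defined analogously. $B^{\emptyset}_-(T)$ is the set of vertices that become blue when the skew forcing rule is applied starting from the empty set until no more forces are possible, and $W^{\emptyset}_-(T)=V(T)\setminus B^{\emptyset}_-(T)$. The skew-nontrivial subgraph $\check G$ of $G$ is obtained by computing $B^{\emptyset}_-(G)$, then deleting each vertex of $B^{\emptyset}_-(G)$ all of whose neighbors are in $B^{\emptyset}_-(G)$, and deleting each edge with both endpoints in $B^{\emptyset}_-(G)$; $T$ is skew-nontrivial if $\check T=T$. The special distance-2 graph $SD_2(T)$ has vertex set $W^{\emptyset}_-(T)$, with $u,w$ adjacent iff $u\ne w$ and $N_T(u)\cap N_T(w)\neq\emptyset$. *)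

theory Defs
  imports Main
begin

definition graph :: "'a set \<Rightarrow> ('a \<Rightarrow> 'a \<Rightarrow> bool) \<Rightarrow> bool" where
  "graph V E \<longleftrightarrow> finite V \<and> (\<forall>u v. E u v \<longrightarrow> E v u) \<and> (\<forall>u. \<not> E u u)
     \<and> (\<forall>u v. E u v \<longrightarrow> u \<in> V \<and> v \<in> V)"

definition nbhd :: "('a \<Rightarrow> 'a \<Rightarrow> bool) \<Rightarrow> 'a \<Rightarrow> 'a set" where
  "nbhd E u = {v. E u v}"

definition connected_graph :: "'a set \<Rightarrow> ('a \<Rightarrow> 'a \<Rightarrow> bool) \<Rightarrow> bool" where
  "connected_graph V E \<longleftrightarrow> (\<forall>u\<in>V. \<forall>v\<in>V. E\<^sup>*\<^sup>* u v)"

definition is_cycle :: "('a \<Rightarrow> 'a \<Rightarrow> bool) \<Rightarrow> 'a list \<Rightarrow> bool" where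
  "is_cycle E cs \<longleftrightarrow> length cs \<ge> 3 \<and> distinct cs
     \<and> (\<forall>i. Suc i < length cs \<longrightarrow> E (cs ! i) (cs ! Suc i))
     \<and> E (last cs) (hd cs)"

definition tree :: "'a set \<Rightarrow> ('a \<Rightarrow> 'a \<Rightarrow> bool) \<Rightarrow> bool" where
  "tree V E \<longleftrightarrow> graph V E \<and> V \<noteq> {} \<and> connected_graph V E \<and> (\<nexists>cs. is_cycle E cs)"

text \<open>One skew force: some vertex u (blue or white) has exactly one white neighbor v,
which becomes blue.  skew_reach V E B B' : B' is obtainable from B by a sequence of forces.\<close>
inductive skew_reach :: "'a set \<Rightarrow> ('a \<Rightarrow> 'a \<Rightarrow> bool) \<Rightarrow> 'a set \<Rightarrow> 'a set \<Rightarrow> bool"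
  for V E where
  refl: "skew_reach V E B B"
| step: "skew_reach V E B B' \<Longrightarrow> u \<in> V \<Longrightarrow> nbhd E u - B' = {v}
          \<Longrightarrow> skew_reach V E B (insert v B')"

definition skew_forcing_set :: "'a set \<Rightarrow> ('a \<Rightarrow> 'a \<Rightarrow> bool) \<Rightarrow> 'a set \<Rightarrow> bool" where
  "skew_forcing_set V E S \<longleftrightarrow> S \<subseteq> V \<and> skew_reach V E S V"

definition skew_closure_empty :: "'a set \<Rightarrow> ('a \<Rightarrow> 'a \<Rightarrow> bool) \<Rightarrow> 'a set" where
  "skew_closure_empty V E = \<Union>{B. skew_reach V E {} B}"

definition skew_white_empty :: "'a set \<Rightarrow> ('a \<Rightarrow> 'a \<Rightarrow> bool) \<Rightarrow> 'a set" where
  "skew_white_empty V E = V - skew_closure_empty V E"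

text \<open>Vertex set of the component of G - B containing v (for v in V - B).\<close>
definition comp_minus :: "'a set \<Rightarrow> ('a \<Rightarrow> 'a \<Rightarrow> bool) \<Rightarrow> 'a set \<Rightarrow> 'a \<Rightarrow> 'a set" where
  "comp_minus V E B v =
     {w. (\<lambda>x y. E x y \<and> x \<in> V - B \<and> y \<in> V - B)\<^sup>*\<^sup>* v w}"

inductive psd_reach :: "'a set \<Rightarrow> ('a \<Rightarrow> 'a \<Rightarrow> bool) \<Rightarrow> 'a set \<Rightarrow> 'a set \<Rightarrow> bool"
  for V E where
  refl: "psd_reach V E B B"
| step: "psd_reach V E B B' \<Longrightarrow> u \<in> B' \<inter> V \<Longrightarrow> v \<in> V - B'
          \<Longrightarrow> nbhd E u \<inter> comp_minus V E B' v = {v}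
          \<Longrightarrow> psd_reach V E B (insert v B')"

definition psd_forcing_set :: "'a set \<Rightarrow> ('a \<Rightarrow> 'a \<Rightarrow> bool) \<Rightarrow> 'a set \<Rightarrow> bool" where
  "psd_forcing_set V E S \<longleftrightarrow> S \<subseteq> V \<and> psd_reach V E S V"

definition skew_nontriv_V :: "'a set \<Rightarrow> ('a \<Rightarrow> 'a \<Rightarrow> bool) \<Rightarrow> 'a set" where
  "skew_nontriv_V V E =
     V - {u \<in> skew_closure_empty V E. nbhd E u \<subseteq> skew_closure_empty V E}"

definition skew_nontriv_E :: "'a set \<Rightarrow> ('a \<Rightarrow> 'a \<Rightarrow> bool) \<Rightarrow> 'a \<Rightarrow> 'a \<Rightarrow> bool" where
  "skew_nontriv_E V E = (\<lambda>u v. E u v \<and>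
     \<not> (u \<in> skew_closure_empty V E \<and> v \<in> skew_closure_empty V E))"

definition skew_nontrivial :: "'a set \<Rightarrow> ('a \<Rightarrow> 'a \<Rightarrow> bool) \<Rightarrow> bool" where
  "skew_nontrivial V E \<longleftrightarrow> skew_nontriv_V V E = V \<and> skew_nontriv_E V E = E"

definition SD2_V :: "'a set \<Rightarrow> ('a \<Rightarrow> 'a \<Rightarrow> bool) \<Rightarrow> 'a set" where
  "SD2_V V E = skew_white_empty V E"

definition SD2_E :: "'a set \<Rightarrow> ('a \<Rightarrow> 'a \<Rightarrow> bool) \<Rightarrow> 'a \<Rightarrow> 'a \<Rightarrow> bool" where
  "SD2_E V E = (\<lambda>u w. u \<in> SD2_V V E \<and> w \<in> SD2_V V E \<and> u \<noteq> w
                    \<and> nbhd E u \<inter> nbhd E w \<noteq> {})"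

end

theory Submission
  imports Defs
begin

(* The vertices B0 that become blue from the empty set can be forced at any time, so S is a
   skew forcing set iff S \<union> B0 skew-forces everything, and no vertex has exactly one
   neighbour in W = V - B0.  In a forest this makes W independent: a longest walk inside W
   would end in a vertex with a second neighbour in W, which extends the walk or closes a cycle.

   A PSD force w \<rightarrow> v in SD2(T) through a common neighbour c gives the skew force c \<rightarrow> v:
   any other white neighbour of c would be an SD2-neighbour of w in the component of v.
   Conversely, if u skew-forces a white v, then u \<in> B0, so u has a second white neighbour w,
   which is already blue; w \<rightarrow> v is a PSD force in SD2(T), since an SD2-path from v to another
   SD2-neighbour of w would lift to a path from v to w in T - u, closing a cycle through u. *)

lemma skew_reach_subset: "skew_reach V E X B \<Longrightarrow> X \<subseteq> B"
  by (induction rule: skew_reach.induct) auto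

lemma skew_reach_subset_Un: "skew_reach V E X B \<Longrightarrow> graph V E \<Longrightarrow> B \<subseteq> X \<union> V"
proof (induction rule: skew_reach.induct)
  case (step B B' u v)
  then have "E u v" by (auto simp: nbhd_def)
  then have "v \<in> V" using step.prems by (auto simp: graph_def)
  then show ?case using step by auto
qed simp

lemma skew_reach_trans:
  assumes "skew_reach V E A B" and "skew_reach V E B C"
  shows "skew_reach V E A C"
  using assms(2,1) by (induction rule: skew_reach.induct) (auto intro: skew_reach.step)

lemma skew_reach_enlarge: "skew_reach V E X B \<Longrightarrow> X \<subseteq> Y \<Longrightarrow> skew_reach V E Y (Y \<union> B)"
proof (induction rule: skew_reach.induct)
  case (refl B)
  then show ?case by (simp add: Un_absorb2 skew_reach.refl)
next
  case (step B B' u v)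
  show ?case
  proof (cases "v \<in> Y \<union> B'")
    case True
    then show ?thesis using step by (simp add: insert_absorb)
  next
    case False
    then have "nbhd E u - (Y \<union> B') = {v}" using step.hyps(3) by auto
    from skew_reach.step[OF step.IH[OF step.prems] step.hyps(2) this] show ?thesis by simp
  qed
qed

lemma skew_reach_Union:
  assumes "finite F" and "\<And>B. B \<in> F \<Longrightarrow> skew_reach V E {} B"
  shows "skew_reach V E {} (\<Union>F)"
  using assms
proof (induction rule: finite_induct)
  case empty
  then show ?case by (simp add: skew_reach.refl)
next
  case (insert B F)
  have "skew_reach V E {} (\<Union>F)"
    using insert.IH insert.prems by blast
  moreover have "skew_reach V E (\<Union>F) (\<Union>F \<union> B)"
    using skew_reach_enlarge[of V E "{}" B "\<Union>F"] insert.prems by simp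
  ultimately have "skew_reach V E {} (\<Union>F \<union> B)"
    by (rule skew_reach_trans)
  then show ?case by (simp add: Un_commute)
qed

lemma skew_reach_closure_empty:
  assumes "graph V E"
  shows "skew_reach V E {} (skew_closure_empty V E)"
proof -
  have "{B. skew_reach V E {} B} \<subseteq> Pow V"
    using skew_reach_subset_Un[OF _ assms] by fastforce
  then have "finite {B. skew_reach V E {} B}"
    using assms finite_subset by (auto simp: graph_def)
  then show ?thesis
    unfolding skew_closure_empty_def by (rule skew_reach_Union) simp
qed

lemma skew_closure_empty_subset: "graph V E \<Longrightarrow> skew_closure_empty V E \<subseteq> V"
  using skew_reach_subset_Un[OF skew_reach_closure_empty] by blast

lemma skew_closure_empty_no_force:
  assumes "graph V E"
  shows "nbhd E u - skew_closure_empty V E \<noteq> {v}"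
proof
  assume force: "nbhd E u - skew_closure_empty V E = {v}"
  then have "E u v" by (auto simp: nbhd_def)
  then have "u \<in> V" using assms by (auto simp: graph_def)
  from skew_reach.step[OF skew_reach_closure_empty[OF assms] this force]
  have "v \<in> skew_closure_empty V E" by (auto simp: skew_closure_empty_def)
  with force show False by auto
qed

lemma skew_forcing_set_iff_closure_empty:
  assumes "graph V E" and "S \<subseteq> V"
  shows "skew_forcing_set V E S \<longleftrightarrow> skew_reach V E (S \<union> skew_closure_empty V E) V"
proof -
  let ?B = "skew_closure_empty V E"
  have "skew_reach V E S (S \<union> ?B)"
    using skew_reach_enlarge[OF skew_reach_closure_empty[OF assms(1)]] by simp
  moreover have "S \<union> ?B \<union> V = V"
    using assms skew_closure_empty_subset by blast
  ultimately show ?thesis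
    using assms(2) skew_reach_enlarge[of V E S V "S \<union> ?B"] skew_reach_trans
    unfolding skew_forcing_set_def by auto
qed

definition is_walk :: "('a \<Rightarrow> 'a \<Rightarrow> bool) \<Rightarrow> 'a list \<Rightarrow> bool" where
  "is_walk E xs \<longleftrightarrow> (\<forall>i. Suc i < length xs \<longrightarrow> E (xs ! i) (xs ! Suc i))"

definition delete_vertex :: "('a \<Rightarrow> 'a \<Rightarrow> bool) \<Rightarrow> 'a \<Rightarrow> 'a \<Rightarrow> 'a \<Rightarrow> bool" where
  "delete_vertex E a = (\<lambda>x y. E x y \<and> x \<noteq> a \<and> y \<noteq> a)"

lemma is_walk_Cons: "is_walk E (x # xs) \<longleftrightarrow> (xs \<noteq> [] \<longrightarrow> E x (hd xs)) \<and> is_walk E xs"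
  by (auto simp: is_walk_def hd_conv_nth nth_Cons split: nat.splits)

lemma is_walk_snoc: "is_walk E (xs @ [y]) \<longleftrightarrow> (xs \<noteq> [] \<longrightarrow> E (last xs) y) \<and> is_walk E xs"
  unfolding is_walk_def
  by (auto simp: nth_append last_conv_nth less_Suc_eq split: if_splits) (metis diff_Suc_Suc diff_zero)

lemma is_walk_drop: "is_walk E xs \<Longrightarrow> is_walk E (drop k xs)"
  by (simp add: is_walk_def)

lemma is_walk_mono: "is_walk R xs \<Longrightarrow> (\<And>x y. R x y \<Longrightarrow> Q x y) \<Longrightarrow> is_walk Q xs"
  by (simp add: is_walk_def)

lemma is_cycle_iff:
  "is_cycle E cs \<longleftrightarrow> 3 \<le> length cs \<and> distinct cs \<and> is_walk E cs \<and> E (last cs) (hd cs)"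
  by (simp add: is_cycle_def is_walk_def)

lemma rtranclp_imp_distinct_walk:
  assumes "R\<^sup>*\<^sup>* x y"
  shows "\<exists>xs. xs \<noteq> [] \<and> distinct xs \<and> hd xs = x \<and> last xs = y \<and> is_walk R xs"
  using assms
proof (induction rule: converse_rtranclp_induct)
  case base
  show ?case by (intro exI[of _ "[y]"]) (simp add: is_walk_def)
next
  case (step x z)
  then obtain ys where ys: "ys \<noteq> []" "distinct ys" "hd ys = z" "last ys = y" "is_walk R ys"
    by blast
  show ?case
  proof (cases "x \<in> set ys")
    case True
    then obtain k where "k < length ys" "ys ! k = x" by (auto simp: in_set_conv_nth)
    then show ?thesis using ys is_walk_drop
      by (intro exI[of _ "drop k ys"]) (auto simp: hd_drop_conv_nth last_drop)
  next
    case False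
    then show ?thesis using ys step.hyps(1)
      by (intro exI[of _ "x # ys"]) (simp add: is_walk_Cons)
  qed
qed

lemma is_cycle_drop_closing_edge:
  assumes "distinct xs" and "is_walk E xs" and "k + 3 \<le> length xs" and "E (last xs) (xs ! k)"
  shows "is_cycle E (drop k xs)"
  using assms by (simp add: is_cycle_iff is_walk_drop hd_drop_conv_nth last_drop)

lemma ex_longest_distinct_walk:
  assumes "finite U" and "distinct ys" and "set ys \<subseteq> U" and "is_walk E ys"
  obtains xs where "distinct xs" "set xs \<subseteq> U" "is_walk E xs" "length ys \<le> length xs"
    and "\<And>zs. distinct zs \<Longrightarrow> set zs \<subseteq> U \<Longrightarrow> is_walk E zs \<Longrightarrow> length zs \<le> length xs"
proof -
  define P where "P xs \<longleftrightarrow> distinct xs \<and> set xs \<subseteq> U \<and> is_walk E xs" for xs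
  have "length xs < Suc (card U)" if "P xs" for xs
  proof -
    have "card (set xs) \<le> card U"
      using that assms(1) by (auto simp: P_def intro: card_mono)
    then show ?thesis using that distinct_card by (fastforce simp: P_def)
  qed
  then obtain xs where "P xs" "\<And>zs. P zs \<Longrightarrow> length zs \<le> length xs"
    using ex_has_greatest_nat[of P ys length "Suc (card U)"] assms(2-4) by (auto simp: P_def)
  then show thesis
    using that assms(2-4) by (auto simp: P_def)
qed

lemma SD2_E_iff:
  "SD2_E V E p q \<longleftrightarrow>
     p \<in> skew_white_empty V E \<and> q \<in> skew_white_empty V E \<and> p \<noteq> q \<and> (\<exists>c. E p c \<and> E q c)"
  by (auto simp: SD2_E_def SD2_V_def nbhd_def)

lemma comp_minus_cases: "x \<in> comp_minus V E B v \<Longrightarrow> x = v \<or> x \<in> V - B"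
  by (auto simp: comp_minus_def elim: rtranclp.cases)

lemma comp_minus_Int: "comp_minus V E (B \<inter> V) v = comp_minus V E B v"
  by (simp add: comp_minus_def Diff_Int)

lemma psd_force_SD2_imp_skew_force:
  assumes graph: "graph V E" and "w \<in> B" and "v \<notin> B"
    and psd: "nbhd (SD2_E V E) w \<inter> comp_minus (SD2_V V E) (SD2_E V E) B v = {v}"
  shows "\<exists>c\<in>V. nbhd E c - (B \<union> skew_closure_empty V E) = {v}"
proof -
  have "SD2_E V E w v" using psd by (auto simp: nbhd_def)
  then obtain c where wc: "E w c" and vc: "E v c" and "v \<in> skew_white_empty V E"
    by (auto simp: SD2_E_iff)
  have "nbhd E c - (B \<union> skew_closure_empty V E) = {v}"
  proof (intro equalityI subsetI)
    fix x assume x: "x \<in> nbhd E c - (B \<union> skew_closure_empty V E)"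
    then have "E x c" "x \<notin> B" using graph by (auto simp: nbhd_def graph_def)
    then have x_white: "x \<in> skew_white_empty V E"
      using x graph by (auto simp: skew_white_empty_def graph_def)
    show "x \<in> {v}"
    proof (rule ccontr)
      assume "x \<notin> {v}"
      then have "SD2_E V E w x" "SD2_E V E v x"
        using \<open>SD2_E V E w v\<close> wc vc \<open>E x c\<close> x_white \<open>w \<in> B\<close> \<open>x \<notin> B\<close>
        by (auto simp: SD2_E_iff)
      then have "x \<in> nbhd (SD2_E V E) w \<inter> comp_minus (SD2_V V E) (SD2_E V E) B v"
        using x_white \<open>v \<in> skew_white_empty V E\<close> \<open>v \<notin> B\<close> \<open>x \<notin> B\<close>
        by (auto simp: nbhd_def comp_minus_def SD2_V_def)
      then show False using psd \<open>x \<notin> {v}\<close> by blast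
    qed
  qed (use vc graph \<open>v \<in> skew_white_empty V E\<close> \<open>v \<notin> B\<close> in
        \<open>auto simp: nbhd_def graph_def skew_white_empty_def\<close>)
  moreover have "c \<in> V" using wc graph by (auto simp: graph_def)
  ultimately show ?thesis by blast
qed

lemma psd_reach_SD2_imp_skew_reach:
  assumes "graph V E" and "psd_reach (SD2_V V E) (SD2_E V E) S B"
  shows "skew_reach V E (S \<union> skew_closure_empty V E) (B \<union> skew_closure_empty V E)"
  using assms(2)
proof (induction rule: psd_reach.induct)
  case (refl B)
  show ?case by (rule skew_reach.refl)
next
  case (step B B' w v)
  then obtain c where "c \<in> V" "nbhd E c - (B' \<union> skew_closure_empty V E) = {v}"
    using psd_force_SD2_imp_skew_force[OF assms(1)] by blast
  from skew_reach.step[OF step.IH this] show ?case by simp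
qed

lemma SD2_component_in_delete_vertex:
  assumes graph: "graph V E" and force: "nbhd E u - B = {v}"
    and "u \<notin> skew_white_empty V E"
    and "x \<in> comp_minus (SD2_V V E) (SD2_E V E) B v"
  shows "(delete_vertex E u)\<^sup>*\<^sup>* v x"
proof -
  let ?W = "skew_white_empty V E"
  have "(\<lambda>p q. SD2_E V E p q \<and> p \<in> ?W - B \<and> q \<in> ?W - B)\<^sup>*\<^sup>* v x"
    using assms(4) by (simp add: comp_minus_def SD2_V_def)
  then show ?thesis
  proof (induction rule: rtranclp_induct)
    case (step p q)
    then obtain c where pq: "p \<in> ?W - B" "q \<in> ?W - B" "p \<noteq> q" and "E p c" "E q c"
      by (auto simp: SD2_E_iff)
    have "c \<noteq> u"
    proof
      assume "c = u"
      then have "p \<in> nbhd E u - B" "q \<in> nbhd E u - B"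
        using \<open>E p c\<close> \<open>E q c\<close> pq graph by (auto simp: nbhd_def graph_def)
      then show False using force \<open>p \<noteq> q\<close> by auto
    qed
    moreover have "p \<noteq> u" "q \<noteq> u" using pq assms(3) by auto
    ultimately have "delete_vertex E u p c" "delete_vertex E u c q"
      using \<open>E p c\<close> \<open>E q c\<close> graph by (auto simp: delete_vertex_def graph_def)
    then show ?case using step.IH by (meson rtranclp.rtrancl_into_rtrancl)
  qed simp
qed

locale finite_forest =
  fixes V :: "'a set" and E :: "'a \<Rightarrow> 'a \<Rightarrow> bool"
  assumes graph: "graph V E" and no_cycle: "\<nexists>cs. is_cycle E cs"
begin

lemma finite_vertices: "finite V"
  and sym: "E u v \<Longrightarrow> E v u"
  and irrefl: "\<not> E u u"
  and edge_in: "E u v \<Longrightarrow> u \<in> V \<and> v \<in> V"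
  using graph by (auto simp: graph_def)

lemma neighbours_disconnected_in_delete_vertex:
  assumes "E a v" and "E a w" and "v \<noteq> w" and "(delete_vertex E a)\<^sup>*\<^sup>* v w"
  shows False
proof -
  obtain xs where xs: "xs \<noteq> []" "distinct xs" "hd xs = v" "last xs = w"
    and walk: "is_walk (delete_vertex E a) xs"
    using rtranclp_imp_distinct_walk[OF assms(4)] by blast
  have "a \<notin> set xs"
  proof
    assume "a \<in> set xs"
    then obtain j where j: "j < length xs" "xs ! j = a" by (auto simp: in_set_conv_nth)
    show False
    proof (cases j)
      case 0
      then show ?thesis using j xs(1,3) assms(1) irrefl by (simp add: hd_conv_nth)
    next
      case (Suc i)
      then show ?thesis using walk j by (auto simp: is_walk_def delete_vertex_def)
    qed
  qed
  moreover have "2 \<le> length xs"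
    using xs assms(3) by (cases xs; cases "tl xs") auto
  moreover have "is_walk E xs"
    using walk by (rule is_walk_mono) (simp add: delete_vertex_def)
  ultimately have "is_cycle E (a # xs)"
    using xs assms(1,2) sym by (simp add: is_cycle_iff is_walk_Cons)
  then show False using no_cycle by blast
qed

lemma no_edge_in_leafless_subset:
  assumes "U \<subseteq> V"
    and leafless: "\<And>z y. z \<in> U \<Longrightarrow> y \<in> U \<Longrightarrow> E z y \<Longrightarrow> \<exists>z'\<in>U. E z z' \<and> z' \<noteq> y"
    and "a \<in> U" and "b \<in> U"
  shows "\<not> E a b"
proof
  assume "E a b"
  then have ab: "distinct [a, b]" "set [a, b] \<subseteq> U" "is_walk E [a, b]"
    using irrefl assms(3,4) by (auto simp: is_walk_Cons is_walk_def)
  have "finite U" using finite_subset[OF assms(1) finite_vertices] .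
  then obtain xs where xs: "distinct xs" "set xs \<subseteq> U" "is_walk E xs" "length [a, b] \<le> length xs"
    and longest: "\<And>ys. distinct ys \<Longrightarrow> set ys \<subseteq> U \<Longrightarrow> is_walk E ys \<Longrightarrow> length ys \<le> length xs"
    using ex_longest_distinct_walk[OF _ ab] by blast
  have len: "2 \<le> length xs" using xs(4) by simp
  define n where "n = length xs"
  define y where "y = xs ! (n - 2)"
  have "xs \<noteq> []" using len by auto
  then have last_xs: "last xs = xs ! (n - 1)" by (simp add: n_def last_conv_nth)
  have "Suc (n - 2) < n" "Suc (n - 2) = n - 1" using len by (auto simp: n_def)
  have "E (xs ! (n - 2)) (xs ! Suc (n - 2))"
    using xs(3) \<open>Suc (n - 2) < n\<close> unfolding is_walk_def n_def by blast
  then have "E y (last xs)"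
    using \<open>Suc (n - 2) = n - 1\<close> by (simp only: y_def last_xs)
  moreover have "y \<in> U" "last xs \<in> U"
    using xs(2) len \<open>xs \<noteq> []\<close> by (auto simp: y_def n_def)
  ultimately obtain z' where z': "z' \<in> U" "E (last xs) z'" "z' \<noteq> y"
    using leafless sym by blast
  show False
  proof (cases "z' \<in> set xs")
    case False
    then have "length (xs @ [z']) \<le> length xs"
      using xs z' by (intro longest) (auto simp: is_walk_snoc)
    then show False by simp
  next
    case True
    then obtain k where k: "k < n" "xs ! k = z'" by (auto simp: in_set_conv_nth n_def)
    have "k \<noteq> n - 1" using k z'(2) irrefl last_xs by auto
    moreover have "k \<noteq> n - 2" using k z'(3) y_def by blast
    ultimately have "k + 3 \<le> length xs" using k(1) len n_def by linarith
    then have "is_cycle E (drop k xs)"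
      using is_cycle_drop_closing_edge xs(1,3) z'(2) k(2) by metis
    then show False using no_cycle by blast
  qed
qed

lemma skew_white_empty_independent:
  assumes "u \<in> skew_white_empty V E" and "v \<in> skew_white_empty V E"
  shows "\<not> E u v"
proof (rule no_edge_in_leafless_subset[OF _ _ assms])
  show "skew_white_empty V E \<subseteq> V" by (auto simp: skew_white_empty_def)
next
  fix z y assume "z \<in> skew_white_empty V E" "y \<in> skew_white_empty V E" "E z y"
  then have "y \<in> nbhd E z - skew_closure_empty V E"
    by (auto simp: nbhd_def skew_white_empty_def)
  moreover have "nbhd E z - skew_closure_empty V E \<noteq> {y}"
    using skew_closure_empty_no_force[OF graph] .
  ultimately obtain z' where "E z z'" "z' \<notin> skew_closure_empty V E" "z' \<noteq> y"
    by (auto simp: nbhd_def)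
  then show "\<exists>z'\<in>skew_white_empty V E. E z z' \<and> z' \<noteq> y"
    using edge_in by (auto simp: skew_white_empty_def)
qed

lemma skew_force_imp_psd_force_SD2:
  assumes force: "nbhd E u - B = {v}" and v_white: "v \<in> skew_white_empty V E"
    and "skew_closure_empty V E \<subseteq> B"
  shows "\<exists>w \<in> B \<inter> skew_white_empty V E.
           nbhd (SD2_E V E) w \<inter> comp_minus (SD2_V V E) (SD2_E V E) (B \<inter> SD2_V V E) v = {v}"
proof -
  let ?W = "skew_white_empty V E"
  have "E u v" using force by (auto simp: nbhd_def)
  then have u_blue: "u \<notin> ?W"
    using skew_white_empty_independent v_white by blast
  have "v \<in> nbhd E u - skew_closure_empty V E"
    using \<open>E u v\<close> v_white by (auto simp: nbhd_def skew_white_empty_def)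
  moreover have "nbhd E u - skew_closure_empty V E \<noteq> {v}"
    using skew_closure_empty_no_force[OF graph] .
  ultimately obtain w where "E u w" "w \<notin> skew_closure_empty V E" "w \<noteq> v"
    by (auto simp: nbhd_def)
  then have w: "w \<in> B" "w \<in> ?W"
    using force edge_in by (auto simp: nbhd_def skew_white_empty_def)
  have "SD2_E V E w v"
    using \<open>E u w\<close> \<open>E u v\<close> \<open>w \<noteq> v\<close> w v_white sym by (auto simp: SD2_E_iff)
  have "nbhd (SD2_E V E) w \<inter> comp_minus (SD2_V V E) (SD2_E V E) B v = {v}"
  proof (intro equalityI subsetI)
    fix x assume x: "x \<in> nbhd (SD2_E V E) w \<inter> comp_minus (SD2_V V E) (SD2_E V E) B v"
    show "x \<in> {v}"
    proof (rule ccontr)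
      assume "x \<notin> {v}"
      then have "x \<in> ?W - B"
        using x comp_minus_cases by (fastforce simp: SD2_V_def)
      obtain c where "E x c" "E w c"
        using x by (auto simp: nbhd_def SD2_E_iff)
      have "c \<noteq> u"
      proof
        assume "c = u"
        then have "x \<in> nbhd E u - B" using \<open>E x c\<close> \<open>x \<in> ?W - B\<close> sym by (auto simp: nbhd_def)
        then show False using force \<open>x \<notin> {v}\<close> by blast
      qed
      then have "delete_vertex E u x c" "delete_vertex E u c w"
        using \<open>E x c\<close> \<open>E w c\<close> \<open>x \<in> ?W - B\<close> w u_blue sym by (auto simp: delete_vertex_def)
      moreover have "(delete_vertex E u)\<^sup>*\<^sup>* v x"
        using SD2_component_in_delete_vertex[OF graph force u_blue] x by blast
      ultimately have "(delete_vertex E u)\<^sup>*\<^sup>* v w"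
        by (meson rtranclp.rtrancl_into_rtrancl)
      then show False using neighbours_disconnected_in_delete_vertex \<open>E u v\<close> \<open>E u w\<close> \<open>w \<noteq> v\<close> by blast
    qed
  qed (use \<open>SD2_E V E w v\<close> in \<open>auto simp: nbhd_def comp_minus_def\<close>)
  then show ?thesis
    using w comp_minus_Int by (metis IntI)
qed

lemma skew_reach_imp_psd_reach_SD2:
  assumes "skew_reach V E (S \<union> skew_closure_empty V E) B" and "S \<subseteq> skew_white_empty V E"
  shows "psd_reach (SD2_V V E) (SD2_E V E) S (B \<inter> SD2_V V E)"
  using assms(1)
proof (induction "S \<union> skew_closure_empty V E" B rule: skew_reach.induct)
  case refl
  have "(S \<union> skew_closure_empty V E) \<inter> SD2_V V E = S"
    using assms(2) by (auto simp: SD2_V_def skew_white_empty_def)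
  then show ?case by (simp add: psd_reach.refl)
next
  case (step B u v)
  show ?case
  proof (cases "v \<in> SD2_V V E - B")
    case True
    have "skew_closure_empty V E \<subseteq> B"
      using skew_reach_subset[OF step.hyps(1)] by blast
    then obtain w where "w \<in> B \<inter> SD2_V V E"
      and "nbhd (SD2_E V E) w \<inter> comp_minus (SD2_V V E) (SD2_E V E) (B \<inter> SD2_V V E) v = {v}"
      using skew_force_imp_psd_force_SD2[OF step.hyps(4)] True by (auto simp: SD2_V_def)
    from psd_reach.step[OF step.hyps(2) _ _ this(2)] this(1) True
    show ?thesis by (simp add: Int_insert_left)
  next
    case False
    then have "insert v B \<inter> SD2_V V E = B \<inter> SD2_V V E" by auto
    then show ?thesis using step.hyps(2) by simp
  qed
qed

lemma psd_reach_SD2_iff_skew_reach: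
  assumes "S \<subseteq> skew_white_empty V E"
  shows "psd_reach (SD2_V V E) (SD2_E V E) S (SD2_V V E)
           \<longleftrightarrow> skew_reach V E (S \<union> skew_closure_empty V E) V"
proof -
  have "SD2_V V E \<union> skew_closure_empty V E = V"
    using skew_closure_empty_subset[OF graph] by (auto simp: SD2_V_def skew_white_empty_def)
  moreover have "V \<inter> SD2_V V E = SD2_V V E"
    by (auto simp: SD2_V_def skew_white_empty_def)
  ultimately show ?thesis
    using psd_reach_SD2_imp_skew_reach[OF graph] skew_reach_imp_psd_reach_SD2[OF _ assms]
    by metis
qed

end

theorem theorem6p6:
  fixes V :: "'a set" and E :: "'a \<Rightarrow> 'a \<Rightarrow> bool" and S :: "'a set"
  assumes "tree V E"
    and "skew_nontrivial V E"
    and "S \<subseteq> skew_white_empty V E"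
  shows "psd_forcing_set (SD2_V V E) (SD2_E V E) S \<longleftrightarrow> skew_forcing_set V E S"
proof -
  interpret finite_forest V E
    using assms(1) by unfold_locales (auto simp: tree_def)
  have "S \<subseteq> V" and "S \<subseteq> SD2_V V E"
    using assms(3) by (auto simp: skew_white_empty_def SD2_V_def)
  then show ?thesis
    using psd_reach_SD2_iff_skew_reach[OF assms(3)] skew_forcing_set_iff_closure_empty[OF graph]
    by (simp add: psd_forcing_set_def)
qed

end
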